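(* Let $\tau>0$, let $\Pi_\tau$ be the law of $f=\sum_{j\ge1}s_j^\tau Z_j\varphi_j$ with $s_j^\tau=(\tau^d\exp(-\tau j^{1/d}))^{1/2}$, and let $\mathbb H_\tau$ be its reproducing kernel Hilbert space. If $f_0\in\mathcal S^\beta(L)$ for some $\beta>0$ and $L>0$, then for all $\tau>0$ and all sufficiently small $\epsilon>0$, \[\inf_{h\in\mathbb H_\tau:\|h-f_0\|\le\epsilon}\|h\|_{\mathbb H_\tau}^2\le\tau^{-d}\Big(L^2e^\tau\vee\epsilon^2\exp\big(2\tau(L/\epsilon)^{1/\beta}\big)\Big).\]
   Context: $G$ is a probability distribution on $\mathcal X\subseteq\mathbb R^d$, $\|\cdot\|$ the norm of $L^2(\mathcal X,G)$, and $(\varphi_j)_{j\in\mathbb N}$ an orthonormal basis of $L^2(\mathcal X,G)$; $Z_j$ are i.i.d. $\mathcal N(0,1)$. $\mathcal S^\beta(L)=\{g\in L^2(\mathcal X,G):\sum_j j^{2\beta/d}\langle g,\varphi_j\rangle^2\le L^2\}$. The RKHS of $f=\sum_j s_jZ_j\varphi_j$ is the set of $g\in L^2(\mathcal X,G)$ with $\|g\|_{\mathbb H}^2=\sum_j\langle g,\varphi_j\rangle^2/s_j^2<\infty$, with this norm. *)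

theory Defs
  imports "HOL-Analysis.Analysis"
begin

text \<open>The space L2(X,G) is modelled as an abstract real Hilbert space 'a with an
orthonormal basis phi indexed by the positive integers j = 1, 2, ...\<close>

definition orthonormal_basis :: "(nat \<Rightarrow> 'a::{real_inner,complete_space}) \<Rightarrow> bool" where
  "orthonormal_basis \<phi> \<longleftrightarrow>
     (\<forall>i\<ge>1. \<forall>j\<ge>1. \<phi> i \<bullet> \<phi> j = (if i = j then 1 else 0)) \<and>
     closure (span (\<phi> ` {1..})) = UNIV"

definition sobolev_ball :: "(nat \<Rightarrow> 'a::real_inner) \<Rightarrow> nat \<Rightarrow> real \<Rightarrow> real \<Rightarrow> 'a set" where
  "sobolev_ball \<phi> d \<beta> L =
     {g. (\<lambda>j. real j powr (2 * \<beta> / real d) * (g \<bullet> \<phi> j)\<^sup>2) summable_on {1..} \<and>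
         (\<Sum>\<^sub>\<infinity>j\<in>{1..}. real j powr (2 * \<beta> / real d) * (g \<bullet> \<phi> j)\<^sup>2) \<le> L\<^sup>2}"

text \<open>RKHS of f = sum_j s_j Z_j phi_j: the set of g with sum_j <g,phi_j>^2 / s_j^2 finite,
and its squared norm.\<close>
definition rkhs :: "(nat \<Rightarrow> real) \<Rightarrow> (nat \<Rightarrow> 'a::real_inner) \<Rightarrow> 'a set" where
  "rkhs s \<phi> = {g. (\<lambda>j. (g \<bullet> \<phi> j)\<^sup>2 / (s j)\<^sup>2) summable_on {1..}}"

definition rkhs_sqnorm :: "(nat \<Rightarrow> real) \<Rightarrow> (nat \<Rightarrow> 'a::real_inner) \<Rightarrow> 'a \<Rightarrow> real" where
  "rkhs_sqnorm s \<phi> g = (\<Sum>\<^sub>\<infinity>j\<in>{1..}. (g \<bullet> \<phi> j)\<^sup>2 / (s j)\<^sup>2)"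

definition s_exp :: "nat \<Rightarrow> real \<Rightarrow> nat \<Rightarrow> real" where
  "s_exp d \<tau> j = sqrt (\<tau> ^ d * exp (- \<tau> * real j powr (1 / real d)))"

end

theory Submission
  imports Defs "HOL-Real_Asymp.Real_Asymp"
begin

text \<open>Truncate the basis expansion of f0 after J \<approx> (L/\<epsilon>)^(d/\<beta>) terms. The Sobolev condition
  bounds the discarded tail by L^2 J^(-2\<beta>/d) \<le> \<epsilon>^2, and the squared RKHS norm of the truncation
  by L^2 exp (\<tau> J^(1/d)) / \<tau>^d with J^(1/d) \<le> (L/\<epsilon>)^(1/\<beta>) + 1. As \<epsilon> \<rightarrow> 0 the quantity
  \<epsilon>^2 exp (\<tau> (L/\<epsilon>)^(1/\<beta>)) eventually exceeds L^2 exp \<tau>, which turns this bound into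
  \<epsilon>^2 exp (2\<tau> (L/\<epsilon>)^(1/\<beta>)) / \<tau>^d.\<close>

definition orthonormal_family :: "(nat \<Rightarrow> 'a::real_inner) \<Rightarrow> bool" where
  "orthonormal_family \<phi> \<longleftrightarrow> (\<forall>i\<ge>1. \<forall>j\<ge>1. \<phi> i \<bullet> \<phi> j = (if i = j then 1 else 0))"

lemma orthonormal_basis_imp_family: "orthonormal_basis \<phi> \<Longrightarrow> orthonormal_family \<phi>"
  unfolding orthonormal_basis_def orthonormal_family_def by blast

definition basis_proj :: "(nat \<Rightarrow> 'a::real_inner) \<Rightarrow> nat \<Rightarrow> 'a \<Rightarrow> 'a" where
  "basis_proj \<phi> n g = (\<Sum>k=1..n. (g \<bullet> \<phi> k) *\<^sub>R \<phi> k)"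

lemma inner_sum_orthonormal:
  assumes "orthonormal_family \<phi>" and "finite A" "A \<subseteq> {1..}" and "k \<ge> 1"
  shows "(\<Sum>i\<in>A. a i *\<^sub>R \<phi> i) \<bullet> \<phi> k = (if k \<in> A then a k else 0)"
proof -
  have "(\<Sum>i\<in>A. a i *\<^sub>R \<phi> i) \<bullet> \<phi> k = (\<Sum>i\<in>A. if i = k then a i else 0)"
    unfolding inner_sum_left
    by (rule sum.cong) (use assms in \<open>auto simp: orthonormal_family_def\<close>)
  then show ?thesis
    using \<open>finite A\<close> by simp
qed

lemma norm_sum_orthonormal_squared:
  assumes "orthonormal_family \<phi>" and "finite A" "A \<subseteq> {1..}"
  shows "(norm (\<Sum>i\<in>A. a i *\<^sub>R \<phi> i))\<^sup>2 = (\<Sum>i\<in>A. (a i)\<^sup>2)"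
proof -
  have "(norm (\<Sum>i\<in>A. a i *\<^sub>R \<phi> i))\<^sup>2 = (\<Sum>k\<in>A. a k * ((\<Sum>i\<in>A. a i *\<^sub>R \<phi> i) \<bullet> \<phi> k))"
    by (simp add: power2_norm_eq_inner inner_sum_right mult.commute)
  also have "\<dots> = (\<Sum>k\<in>A. (a k)\<^sup>2)"
    by (rule sum.cong) (use inner_sum_orthonormal[OF assms] assms in \<open>auto simp: power2_eq_square\<close>)
  finally show ?thesis .
qed

lemma inner_basis_proj:
  assumes "orthonormal_family \<phi>" and "k \<ge> 1"
  shows "basis_proj \<phi> n g \<bullet> \<phi> k = (if k \<le> n then g \<bullet> \<phi> k else 0)"
  unfolding basis_proj_def using inner_sum_orthonormal[OF assms(1), of "{1..n}" k] assms(2) by auto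

lemma basis_proj_in_span: "basis_proj \<phi> n g \<in> span (\<phi> ` {1..n})"
  unfolding basis_proj_def by (intro span_sum span_scale span_base) auto

lemma span_image_atLeastAtMost_mono:
  fixes \<phi> :: "nat \<Rightarrow> 'a::real_vector"
  shows "m \<le> n \<Longrightarrow> span (\<phi> ` {1..m}) \<subseteq> span (\<phi> ` {1..n})"
  by (intro span_mono image_mono) auto

lemma orthogonal_basis_proj_span:
  assumes "orthonormal_family \<phi>" and "v \<in> span (\<phi> ` {1..n})"
  shows "orthogonal (g - basis_proj \<phi> n g) v"
  using assms(2)
proof (rule orthogonal_to_span)
  fix y assume "y \<in> \<phi> ` {1..n}"
  then obtain k where "k \<in> {1..n}" "y = \<phi> k" by auto
  then show "orthogonal (g - basis_proj \<phi> n g) y"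
    using inner_basis_proj[OF assms(1), of k n g] by (simp add: orthogonal_def inner_diff_left)
qed

lemma norm_diff_basis_proj_le:
  assumes "orthonormal_family \<phi>" and "v \<in> span (\<phi> ` {1..n})"
  shows "norm (g - basis_proj \<phi> n g) \<le> norm (g - v)"
proof -
  have "basis_proj \<phi> n g - v \<in> span (\<phi> ` {1..n})"
    by (intro span_diff basis_proj_in_span assms(2))
  then have "orthogonal (g - basis_proj \<phi> n g) (basis_proj \<phi> n g - v)"
    by (rule orthogonal_basis_proj_span[OF assms(1)])
  then have "(norm (g - v))\<^sup>2 = (norm (g - basis_proj \<phi> n g))\<^sup>2 + (norm (basis_proj \<phi> n g - v))\<^sup>2"
    using norm_add_Pythagorean by fastforce
  then have "(norm (g - basis_proj \<phi> n g))\<^sup>2 \<le> (norm (g - v))\<^sup>2"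
    by simp
  then show ?thesis
    by (rule power2_le_imp_le) simp
qed

lemma span_image_atLeast_bounded:
  fixes \<phi> :: "nat \<Rightarrow> 'a::real_vector"
  assumes "v \<in> span (\<phi> ` {1..})"
  obtains N where "v \<in> span (\<phi> ` {1..N})"
proof -
  obtain t r where t: "finite t" "t \<subseteq> \<phi> ` {1..}" and v: "v = (\<Sum>a\<in>t. r a *\<^sub>R a)"
    using assms unfolding span_explicit by blast
  obtain K where K: "K \<subseteq> {1..}" "finite K" "t = \<phi> ` K"
    using finite_subset_image[OF t] by blast
  have "t \<subseteq> \<phi> ` {1..Max K}"
    using K by (auto intro: Max_ge)
  then have "v \<in> span (\<phi> ` {1..Max K})"
    unfolding v by (intro span_sum span_scale span_base) auto
  then show thesis ..
qed

lemma LIMSEQ_basis_proj: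
  assumes "orthonormal_basis \<phi>"
  shows "(\<lambda>n. basis_proj \<phi> n g) \<longlonglongrightarrow> g"
proof (rule LIMSEQ_I)
  fix e :: real assume "e > 0"
  have "g \<in> closure (span (\<phi> ` {1..}))"
    using assms by (simp add: orthonormal_basis_def)
  then obtain v where v: "v \<in> span (\<phi> ` {1..})" "dist v g < e"
    using \<open>e > 0\<close> closure_approachable by metis
  obtain N where N: "v \<in> span (\<phi> ` {1..N})"
    using span_image_atLeast_bounded[OF v(1)] .
  have "norm (basis_proj \<phi> n g - g) < e" if "n \<ge> N" for n
  proof -
    have "norm (g - basis_proj \<phi> n g) \<le> norm (g - v)"
      using N span_image_atLeastAtMost_mono[OF that]
      by (intro norm_diff_basis_proj_le orthonormal_basis_imp_family assms) auto
    also have "\<dots> < e"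
      using v(2) by (simp add: dist_norm norm_minus_commute)
    finally show ?thesis
      by (simp add: norm_minus_commute)
  qed
  then show "\<exists>N. \<forall>n\<ge>N. norm (basis_proj \<phi> n g - g) < e" by blast
qed

lemma norm_diff_basis_proj_split:
  assumes "orthonormal_family \<phi>" and "m \<le> n"
  shows "(norm (g - basis_proj \<phi> m g))\<^sup>2
           = (norm (g - basis_proj \<phi> n g))\<^sup>2 + (\<Sum>k\<in>{m<..n}. (g \<bullet> \<phi> k)\<^sup>2)"
proof -
  have "{1..n} - {1..m} = {m<..n}" by auto
  then have diff: "basis_proj \<phi> n g - basis_proj \<phi> m g = (\<Sum>k\<in>{m<..n}. (g \<bullet> \<phi> k) *\<^sub>R \<phi> k)"
    unfolding basis_proj_def using assms(2) by (subst sum_diff[symmetric]) auto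
  have "basis_proj \<phi> n g - basis_proj \<phi> m g \<in> span (\<phi> ` {1..n})"
    using basis_proj_in_span[of \<phi> m g] span_image_atLeastAtMost_mono[OF assms(2)]
    by (intro span_diff basis_proj_in_span) auto
  then have "orthogonal (g - basis_proj \<phi> n g) (basis_proj \<phi> n g - basis_proj \<phi> m g)"
    by (rule orthogonal_basis_proj_span[OF assms(1)])
  then have "(norm (g - basis_proj \<phi> m g))\<^sup>2
      = (norm (g - basis_proj \<phi> n g))\<^sup>2 + (norm (basis_proj \<phi> n g - basis_proj \<phi> m g))\<^sup>2"
    using norm_add_Pythagorean by fastforce
  also have "(norm (basis_proj \<phi> n g - basis_proj \<phi> m g))\<^sup>2 = (\<Sum>k\<in>{m<..n}. (g \<bullet> \<phi> k)\<^sup>2)"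
    unfolding diff by (rule norm_sum_orthonormal_squared[OF assms(1)]) auto
  finally show ?thesis .
qed

lemma norm_diff_basis_proj_le_tail_bound:
  assumes "orthonormal_basis \<phi>" and "\<And>n. (\<Sum>k\<in>{m<..n}. (g \<bullet> \<phi> k)\<^sup>2) \<le> B"
  shows "(norm (g - basis_proj \<phi> m g))\<^sup>2 \<le> B"
proof (rule LIMSEQ_le_const2)
  have "(\<lambda>n. (norm (g - basis_proj \<phi> n g))\<^sup>2) \<longlonglongrightarrow> (norm (g - g))\<^sup>2"
    by (intro tendsto_intros LIMSEQ_basis_proj assms(1))
  from tendsto_diff[OF tendsto_const[of "(norm (g - basis_proj \<phi> m g))\<^sup>2"] this]
  show "(\<lambda>n. (norm (g - basis_proj \<phi> m g))\<^sup>2 - (norm (g - basis_proj \<phi> n g))\<^sup>2)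
      \<longlonglongrightarrow> (norm (g - basis_proj \<phi> m g))\<^sup>2"
    by simp
  show "\<exists>N. \<forall>n\<ge>N. (norm (g - basis_proj \<phi> m g))\<^sup>2 - (norm (g - basis_proj \<phi> n g))\<^sup>2 \<le> B"
    using norm_diff_basis_proj_split[OF orthonormal_basis_imp_family[OF assms(1)]] assms(2)
    by (intro exI[of _ m]) force
qed

lemma basis_proj_in_rkhs:
  assumes "orthonormal_family \<phi>"
  shows "basis_proj \<phi> n g \<in> rkhs s \<phi>"
proof -
  have "(\<lambda>k. (basis_proj \<phi> n g \<bullet> \<phi> k)\<^sup>2 / (s k)\<^sup>2) summable_on {1..}
          \<longleftrightarrow> (\<lambda>k. (g \<bullet> \<phi> k)\<^sup>2 / (s k)\<^sup>2) summable_on {1..n}"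
    by (rule summable_on_cong_neutral) (auto simp: inner_basis_proj[OF assms])
  then show ?thesis
    unfolding rkhs_def by simp
qed

lemma rkhs_sqnorm_basis_proj:
  assumes "orthonormal_family \<phi>"
  shows "rkhs_sqnorm s \<phi> (basis_proj \<phi> n g) = (\<Sum>k=1..n. (g \<bullet> \<phi> k)\<^sup>2 / (s k)\<^sup>2)"
proof -
  have "rkhs_sqnorm s \<phi> (basis_proj \<phi> n g) = (\<Sum>\<^sub>\<infinity>k\<in>{1..n}. (g \<bullet> \<phi> k)\<^sup>2 / (s k)\<^sup>2)"
    unfolding rkhs_sqnorm_def
    by (rule infsum_cong_neutral) (auto simp: inner_basis_proj[OF assms])
  then show ?thesis by simp
qed

lemma sobolev_ball_weighted_sum_le:
  assumes "f \<in> sobolev_ball \<phi> d \<beta> L" and "finite B" "B \<subseteq> {1..}"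
  shows "(\<Sum>j\<in>B. real j powr (2 * \<beta> / real d) * (f \<bullet> \<phi> j)\<^sup>2) \<le> L\<^sup>2"
proof -
  have "(\<Sum>j\<in>B. real j powr (2 * \<beta> / real d) * (f \<bullet> \<phi> j)\<^sup>2)
          \<le> (\<Sum>\<^sub>\<infinity>j\<in>{1..}. real j powr (2 * \<beta> / real d) * (f \<bullet> \<phi> j)\<^sup>2)"
    using assms by (intro finite_sum_le_infsum) (auto simp: sobolev_ball_def)
  also have "\<dots> \<le> L\<^sup>2"
    using assms(1) by (simp add: sobolev_ball_def)
  finally show ?thesis .
qed

lemma sobolev_ball_sum_coeff_le:
  assumes "f \<in> sobolev_ball \<phi> d \<beta> L" and "\<beta> \<ge> 0"
  shows "(\<Sum>k=1..n. (f \<bullet> \<phi> k)\<^sup>2) \<le> L\<^sup>2"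
proof -
  have "(\<Sum>k=1..n. (f \<bullet> \<phi> k)\<^sup>2) \<le> (\<Sum>k=1..n. real k powr (2 * \<beta> / real d) * (f \<bullet> \<phi> k)\<^sup>2)"
  proof (rule sum_mono)
    fix k assume "k \<in> {1..n}"
    then have "1 \<le> real k powr (2 * \<beta> / real d)"
      using assms(2) by (intro ge_one_powr_ge_zero) auto
    then show "(f \<bullet> \<phi> k)\<^sup>2 \<le> real k powr (2 * \<beta> / real d) * (f \<bullet> \<phi> k)\<^sup>2"
      using mult_right_mono[of 1 _ "(f \<bullet> \<phi> k)\<^sup>2"] by simp
  qed
  also have "\<dots> \<le> L\<^sup>2"
    using assms(1) by (rule sobolev_ball_weighted_sum_le) auto
  finally show ?thesis .
qed

lemma sobolev_ball_tail_sum_le: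
  assumes "f \<in> sobolev_ball \<phi> d \<beta> L" and "\<beta> \<ge> 0"
  shows "real m powr (2 * \<beta> / real d) * (\<Sum>k\<in>{m<..n}. (f \<bullet> \<phi> k)\<^sup>2) \<le> L\<^sup>2"
proof -
  have "real m powr (2 * \<beta> / real d) * (\<Sum>k\<in>{m<..n}. (f \<bullet> \<phi> k)\<^sup>2)
          \<le> (\<Sum>k\<in>{m<..n}. real k powr (2 * \<beta> / real d) * (f \<bullet> \<phi> k)\<^sup>2)"
    unfolding sum_distrib_left
    using assms(2) by (intro sum_mono mult_right_mono powr_mono2) auto
  also have "\<dots> \<le> L\<^sup>2"
    using assms(1) by (rule sobolev_ball_weighted_sum_le) auto
  finally show ?thesis .
qed

lemma sobolev_ball_norm_diff_basis_proj:
  assumes "orthonormal_basis \<phi>" and "f \<in> sobolev_ball \<phi> d \<beta> L" and "\<beta> \<ge> 0"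
  shows "real m powr (2 * \<beta> / real d) * (norm (f - basis_proj \<phi> m f))\<^sup>2 \<le> L\<^sup>2"
proof (cases "m = 0")
  case False
  define w where "w = real m powr (2 * \<beta> / real d)"
  have "w > 0"
    using False by (simp add: w_def)
  have "(norm (f - basis_proj \<phi> m f))\<^sup>2 \<le> L\<^sup>2 / w"
    using sobolev_ball_tail_sum_le[OF assms(2,3)] \<open>w > 0\<close>
    by (intro norm_diff_basis_proj_le_tail_bound[OF assms(1)]) (simp add: w_def field_simps)
  then show ?thesis
    using \<open>w > 0\<close> by (simp add: w_def field_simps)
qed simp

lemma s_exp_squared:
  assumes "\<tau> \<ge> 0"
  shows "(s_exp d \<tau> j)\<^sup>2 = \<tau> ^ d * exp (- \<tau> * real j powr (1 / real d))"
  unfolding s_exp_def using assms by simp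

lemma rkhs_sqnorm_s_exp_basis_proj_le:
  assumes "orthonormal_family \<phi>" and "f \<in> sobolev_ball \<phi> d \<beta> L" and "\<beta> \<ge> 0" and "\<tau> > 0"
  shows "rkhs_sqnorm (s_exp d \<tau>) \<phi> (basis_proj \<phi> n f)
           \<le> L\<^sup>2 * exp (\<tau> * real n powr (1 / real d)) / \<tau> ^ d"
proof -
  have "rkhs_sqnorm (s_exp d \<tau>) \<phi> (basis_proj \<phi> n f)
          \<le> (\<Sum>k=1..n. (f \<bullet> \<phi> k)\<^sup>2 * exp (\<tau> * real n powr (1 / real d)) / \<tau> ^ d)"
    unfolding rkhs_sqnorm_basis_proj[OF assms(1)]
  proof (rule sum_mono)
    fix k assume "k \<in> {1..n}"
    then have "exp (\<tau> * real k powr (1 / real d)) \<le> exp (\<tau> * real n powr (1 / real d))"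
      using assms(4) by (auto intro!: powr_mono2)
    then show "(f \<bullet> \<phi> k)\<^sup>2 / (s_exp d \<tau> k)\<^sup>2
                 \<le> (f \<bullet> \<phi> k)\<^sup>2 * exp (\<tau> * real n powr (1 / real d)) / \<tau> ^ d"
      using assms(4)
      by (simp add: s_exp_squared exp_minus divide_right_mono mult_left_mono field_simps)
  qed
  also have "\<dots> = (\<Sum>k=1..n. (f \<bullet> \<phi> k)\<^sup>2) * exp (\<tau> * real n powr (1 / real d)) / \<tau> ^ d"
    by (simp add: sum_divide_distrib sum_distrib_right)
  also have "\<dots> \<le> L\<^sup>2 * exp (\<tau> * real n powr (1 / real d)) / \<tau> ^ d"
    using sobolev_ball_sum_coeff_le[OF assms(2,3)] assms(4)
    by (intro divide_right_mono mult_right_mono) auto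
  finally show ?thesis .
qed

lemma power_plus_one_le:
  fixes x :: real
  assumes "x \<ge> 0" and "d \<ge> 1"
  shows "x ^ d + 1 \<le> (x + 1) ^ d"
  using assms(2)
proof (induction d rule: nat_induct_at_least)
  case (Suc n)
  have "x ^ Suc n + 1 \<le> (x + 1) * (x ^ n + 1)"
    using assms(1) by (simp add: algebra_simps)
  also have "\<dots> \<le> (x + 1) * (x + 1) ^ n"
    using Suc.IH assms(1) by (intro mult_left_mono) auto
  finally show ?case by simp
qed simp

lemma root_ceiling_power_le:
  fixes x :: real
  assumes "x \<ge> 0" and "d \<ge> 1"
  shows "real (nat \<lceil>x ^ d\<rceil>) powr (1 / real d) \<le> x + 1"
proof -
  have "real (nat \<lceil>x ^ d\<rceil>) \<le> x ^ d + 1"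
    using assms(1) by simp
  also have "\<dots> \<le> (x + 1) ^ d"
    using assms by (rule power_plus_one_le)
  finally have "real (nat \<lceil>x ^ d\<rceil>) \<le> (x + 1) ^ d" .
  then have "real (nat \<lceil>x ^ d\<rceil>) powr (1 / real d) \<le> ((x + 1) ^ d) powr (1 / real d)"
    by (intro powr_mono2) auto
  also have "\<dots> = x + 1"
    using assms by (simp add: powr_realpow[symmetric] powr_powr)
  finally show ?thesis .
qed

lemma root_power_powr_eq_square:
  fixes y \<beta> :: real
  assumes "y > 0" and "\<beta> > 0" and "d \<ge> 1"
  shows "((y powr (1 / \<beta>)) ^ d) powr (2 * \<beta> / real d) = y\<^sup>2"
proof -
  have "((y powr (1 / \<beta>)) ^ d) powr (2 * \<beta> / real d)
          = y powr (1 / \<beta> * real d * (2 * \<beta> / real d))"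
    using assms(1) by (simp add: powr_realpow[symmetric] powr_powr del: powr_realpow)
  also have "1 / \<beta> * real d * (2 * \<beta> / real d) = 2"
    using assms(2,3) by simp
  finally show ?thesis
    using assms(1) by simp
qed

lemma sobolev_ball_rkhs_s_exp_approx:
  assumes "orthonormal_basis \<phi>" and "d \<ge> 1" and "\<beta> > 0" and "L > 0"
    and "f \<in> sobolev_ball \<phi> d \<beta> L" and "\<tau> > 0" and "\<epsilon> > 0"
  obtains h where "h \<in> rkhs (s_exp d \<tau>) \<phi>" and "norm (h - f) \<le> \<epsilon>"
    and "rkhs_sqnorm (s_exp d \<tau>) \<phi> h
           \<le> L\<^sup>2 * exp \<tau> * exp (\<tau> * (L / \<epsilon>) powr (1 / \<beta>)) / \<tau> ^ d"
proof -
  define x where "x = (L / \<epsilon>) powr (1 / \<beta>)"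
  define J where "J = nat \<lceil>x ^ d\<rceil>"
  have "x > 0"
    unfolding x_def using assms(4,7) by (simp only: powr_gt_zero divide_eq_0_iff) linarith
  have ob: "orthonormal_family \<phi>"
    using assms(1) by (rule orthonormal_basis_imp_family)
  have "(L / \<epsilon>)\<^sup>2 = (x ^ d) powr (2 * \<beta> / real d)"
    unfolding x_def using assms(2,3,4,7) by (intro root_power_powr_eq_square[symmetric]) auto
  also have "\<dots> \<le> real J powr (2 * \<beta> / real d)"
    using \<open>x > 0\<close> assms(3) by (intro powr_mono2) (auto simp: J_def)
  finally have "(L / \<epsilon>)\<^sup>2 * (norm (f - basis_proj \<phi> J f))\<^sup>2
                  \<le> real J powr (2 * \<beta> / real d) * (norm (f - basis_proj \<phi> J f))\<^sup>2"
    by (rule mult_right_mono) simp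
  also have "\<dots> \<le> L\<^sup>2"
    using assms(3) by (intro sobolev_ball_norm_diff_basis_proj[OF assms(1,5)]) simp
  finally have "(norm (f - basis_proj \<phi> J f))\<^sup>2 \<le> \<epsilon>\<^sup>2"
    using assms(4,7) by (simp add: power_divide field_simps)
  then have "norm (f - basis_proj \<phi> J f) \<le> \<epsilon>"
    by (rule power2_le_imp_le) (use assms(7) in simp)
  then have close: "norm (basis_proj \<phi> J f - f) \<le> \<epsilon>"
    by (simp add: norm_minus_commute)
  have "rkhs_sqnorm (s_exp d \<tau>) \<phi> (basis_proj \<phi> J f)
          \<le> L\<^sup>2 * exp (\<tau> * real J powr (1 / real d)) / \<tau> ^ d"
    using assms(3) by (intro rkhs_sqnorm_s_exp_basis_proj_le[OF ob assms(5) _ assms(6)]) auto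
  also have "\<dots> \<le> L\<^sup>2 * exp (\<tau> * (x + 1)) / \<tau> ^ d"
    using root_ceiling_power_le[of x d] \<open>x > 0\<close> assms(2,6)
    by (intro divide_right_mono mult_left_mono) (auto simp: J_def)
  also have "\<dots> = L\<^sup>2 * exp \<tau> * exp (\<tau> * (L / \<epsilon>) powr (1 / \<beta>)) / \<tau> ^ d"
    by (simp add: x_def distrib_left exp_add mult.commute)
  finally show thesis
    using that[OF basis_proj_in_rkhs[OF ob] close] by blast
qed

lemma Inf_rkhs_sqnorm_le:
  assumes "h \<in> rkhs s \<phi>" and "P h"
  shows "Inf {rkhs_sqnorm s \<phi> g | g. g \<in> rkhs s \<phi> \<and> P g} \<le> rkhs_sqnorm s \<phi> h"
  using assms by (intro cInf_lower bdd_belowI[of _ 0]) (auto simp: rkhs_sqnorm_def intro!: infsum_nonneg)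

lemma eventually_square_exp_root_ge:
  fixes c \<tau> \<beta> L :: real
  assumes "\<tau> > 0" and "\<beta> > 0" and "L > 0"
  shows "\<forall>\<^sub>F \<epsilon> in at_right 0. c \<le> \<epsilon>\<^sup>2 * exp (\<tau> * (L / \<epsilon>) powr (1 / \<beta>))"
proof -
  have "filterlim (\<lambda>\<epsilon>::real. \<epsilon>\<^sup>2 * exp (\<tau> * (L / \<epsilon>) powr (1 / \<beta>))) at_top (at_right 0)"
    using assms by real_asymp
  then show ?thesis
    unfolding filterlim_at_top by blast
qed

theorem lemma9:
  fixes \<phi> :: "nat \<Rightarrow> 'a::{real_inner,complete_space}"
    and f0 :: 'a and d :: nat and \<beta> L :: real
  assumes "orthonormal_basis \<phi>"
    and "d \<ge> 1"
    and "\<beta> > 0" and "L > 0"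
    and "f0 \<in> sobolev_ball \<phi> d \<beta> L"
  shows "\<forall>\<tau>>0. \<forall>\<^sub>F \<epsilon> in at_right 0.
           Inf {rkhs_sqnorm (s_exp d \<tau>) \<phi> h | h. h \<in> rkhs (s_exp d \<tau>) \<phi> \<and> norm (h - f0) \<le> \<epsilon>}
             \<le> \<tau> powr (- real d) *
                max (L\<^sup>2 * exp \<tau>) (\<epsilon>\<^sup>2 * exp (2 * \<tau> * (L / \<epsilon>) powr (1 / \<beta>)))"
proof (intro allI impI)
  fix \<tau> :: real
  assume "\<tau> > 0"
  define X where "X \<epsilon> = \<tau> * (L / \<epsilon>) powr (1 / \<beta>)" for \<epsilon> :: real
  have "\<forall>\<^sub>F \<epsilon> in at_right 0. 0 < \<epsilon> \<and> L\<^sup>2 * exp \<tau> \<le> \<epsilon>\<^sup>2 * exp (X \<epsilon>)"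
    unfolding X_def using eventually_at_right_less eventually_square_exp_root_ge[OF \<open>\<tau> > 0\<close> assms(3,4)]
    by (rule eventually_conj)
  then show "\<forall>\<^sub>F \<epsilon> in at_right 0.
           Inf {rkhs_sqnorm (s_exp d \<tau>) \<phi> h | h. h \<in> rkhs (s_exp d \<tau>) \<phi> \<and> norm (h - f0) \<le> \<epsilon>}
             \<le> \<tau> powr (- real d) *
                max (L\<^sup>2 * exp \<tau>) (\<epsilon>\<^sup>2 * exp (2 * \<tau> * (L / \<epsilon>) powr (1 / \<beta>)))"
  proof eventually_elim
    case (elim \<epsilon>)
    then obtain h where h: "h \<in> rkhs (s_exp d \<tau>) \<phi>" "norm (h - f0) \<le> \<epsilon>"
      and h_norm: "rkhs_sqnorm (s_exp d \<tau>) \<phi> h \<le> L\<^sup>2 * exp \<tau> * exp (X \<epsilon>) / \<tau> ^ d"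
      using sobolev_ball_rkhs_s_exp_approx[OF assms \<open>\<tau> > 0\<close>, of \<epsilon>] unfolding X_def by blast
    have "Inf {rkhs_sqnorm (s_exp d \<tau>) \<phi> h | h. h \<in> rkhs (s_exp d \<tau>) \<phi> \<and> norm (h - f0) \<le> \<epsilon>}
            \<le> L\<^sup>2 * exp \<tau> * exp (X \<epsilon>) / \<tau> ^ d"
      using Inf_rkhs_sqnorm_le[of h _ _ "\<lambda>g. norm (g - f0) \<le> \<epsilon>"] h h_norm by force
    also have "\<dots> \<le> \<epsilon>\<^sup>2 * exp (X \<epsilon>) * exp (X \<epsilon>) / \<tau> ^ d"
      using elim \<open>\<tau> > 0\<close> by (intro divide_right_mono mult_right_mono) auto
    also have "\<dots> = \<tau> powr (- real d) * (\<epsilon>\<^sup>2 * exp (2 * \<tau> * (L / \<epsilon>) powr (1 / \<beta>)))"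
      using \<open>\<tau> > 0\<close> by (simp add: X_def powr_minus powr_realpow divide_inverse mult_exp_exp)
    also have "\<dots> \<le> \<tau> powr (- real d) *
                max (L\<^sup>2 * exp \<tau>) (\<epsilon>\<^sup>2 * exp (2 * \<tau> * (L / \<epsilon>) powr (1 / \<beta>)))"
      by (intro mult_left_mono) auto
    finally show ?case .
  qed
qed

end
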